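(* Suppose Assumptions 1, 2 and 3 hold and that both of the following second-order cone programs are feasible: (P1) minimize $\|\mathbf z-\mu^*\|_U$ over $\mathbf z\in\mathbb R^{\mathbb S}$ subject to $\sum_{s\neq\tilde s}\bar\pi^*(1|s)z(s)\ge\alpha$, $\mathbf z\mathbf 1^\top=1$, $\mathbf z\ge0$; (P2) minimize $\|\mathbf z-\mu^*\|_U$ over $\mathbf z\in\mathbb R^{\mathbb S}$ subject to $\sum_{s\neq\tilde s}\bar\pi^*(0|s)z(s)\ge1-\alpha$, $\mathbf z\mathbf 1^\top=1$, $\mathbf z\ge0$. Let $\eta_1,\eta_2$ be their optimal values, $\eta=\min(\eta_1,\eta_2)$, and $\epsilon^{\mathrm{fe}}_N=2\sqrt2\,\lambda_U^{1/2}(|S^\emptyset|+1)/N$. Then for every system state $x$ of the $N$-armed system and every $D\subseteq[N]$ with $\|x(D)-m(D)\mu^*\|_U\le\eta m(D)-\epsilon^{\mathrm{fe}}_N$, $$\sum_{s\neq\tilde s}\bar\pi^*(1|s)x(D,s)\le\alpha m(D)-\frac{|S^\emptyset|+1}{N}\quad\text{and}\quad\sum_{s\neq\tilde s}\bar\pi^*(0|s)x(D,s)\le(1-\alpha)m(D)-\frac{|S^\emptyset|+1}{N}.$$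
   Context: Single-armed MDP $(\mathbb S,\{0,1\},P,r)$, finite $\mathbb S$, budget $\alpha\in(0,1)$; $N$-armed system with arm states $S(i)$; a system state $x$ assigns to $D\subseteq[N]$ the row vector $x(D)$ with $x(D,s)=\frac1N\#\{i\in D:S(i)=s\}$; $m(D)=|D|/N$. LP relaxation: maximize $\sum r(s,a)y(s,a)$ over $y\ge0$ s.t. $\sum_sy(s,1)=\alpha$, $\sum_{s',a}y(s',a)P(s',a,s)=\sum_ay(s,a)$ for all $s$, $\sum y=1$; $y^*$ a fixed optimal solution. $\bar\pi^*(a|s)=y^*(s,a)/(y^*(s,0)+y^*(s,1))$ if denominator $>0$, else $1/2$; $P_{\bar\pi^*}(s,s')=\sum_a\bar\pi^*(a|s)P(s,a,s')$; $\mu^*(s)=y^*(s,0)+y^*(s,1)$; $\mathbf 1$ all-ones row vector. Assumption 1: $1$ is a simple eigenvalue of $P_{\bar\pi^*}$, others of modulus $<1$. Assumption 2: unique $\tilde s$ with $y^*(\tilde s,0),y^*(\tilde s,1)>0$. $\Phi=P_{\bar\pi^*}-\mathbf 1^\top\mu^*-(c-\alpha\mathbf 1)^\top(P_1(\tilde s)-P_0(\tilde s))$, $c=(\bar\pi^*(1|s))_s$, $P_a(\tilde s)=(P(\tilde s,a,s))_s$. Assumption 3: all eigenvalues of $\Phi$ have modulus $<1$. $S^\emptyset=\{s:y^*(s,1)=y^*(s,0)=0\}$. $U=\sum_{k\ge0}\Phi^k(\Phi^\top)^k$, $\|v\|_U=\sqrt{vUv^\top}$, $\lambda_U$ the largest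 eigenvalue of $U$. *)

theory Defs
  imports "Jordan_Normal_Form.Char_Poly"
begin

text \<open>The finite state space is {0..<n} (state s is the natural number s < n).
Actions are 0 (passive) and 1 (active). P s a s' is the transition probability,
r s a the reward, y s a an LP variable. Row vectors are functions nat => real,
only their entries at indices < n matter. The N arms are indexed by {1..N},
Sa i is the state of arm i.\<close>

definition is_mdp :: "nat \<Rightarrow> (nat \<Rightarrow> nat \<Rightarrow> nat \<Rightarrow> real) \<Rightarrow> bool" where
  "is_mdp n P \<longleftrightarrow> (\<forall>s<n. \<forall>a<2. (\<forall>s'<n. P s a s' \<ge> 0) \<and> (\<Sum>s'<n. P s a s') = 1)"

definition lp_feasible :: "nat \<Rightarrow> (nat \<Rightarrow> nat \<Rightarrow> nat \<Rightarrow> real) \<Rightarrow> real \<Rightarrow> (nat \<Rightarrow> nat \<Rightarrow> real) \<Rightarrow> bool" where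
  "lp_feasible n P \<alpha> y \<longleftrightarrow>
     (\<forall>s<n. \<forall>a<2. y s a \<ge> 0) \<and>
     (\<Sum>s<n. y s 1) = \<alpha> \<and>
     (\<forall>s<n. (\<Sum>s'<n. \<Sum>a<2. y s' a * P s' a s) = (\<Sum>a<2. y s a)) \<and>
     (\<Sum>s<n. \<Sum>a<2. y s a) = 1"

definition lp_objective :: "nat \<Rightarrow> (nat \<Rightarrow> nat \<Rightarrow> real) \<Rightarrow> (nat \<Rightarrow> nat \<Rightarrow> real) \<Rightarrow> real" where
  "lp_objective n r y = (\<Sum>s<n. \<Sum>a<2. r s a * y s a)"

definition lp_optimal :: "nat \<Rightarrow> (nat \<Rightarrow> nat \<Rightarrow> nat \<Rightarrow> real) \<Rightarrow> (nat \<Rightarrow> nat \<Rightarrow> real) \<Rightarrow> real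
     \<Rightarrow> (nat \<Rightarrow> nat \<Rightarrow> real) \<Rightarrow> bool" where
  "lp_optimal n P r \<alpha> y \<longleftrightarrow> lp_feasible n P \<alpha> y \<and>
     (\<forall>y'. lp_feasible n P \<alpha> y' \<longrightarrow> lp_objective n r y' \<le> lp_objective n r y)"

definition mu_star :: "(nat \<Rightarrow> nat \<Rightarrow> real) \<Rightarrow> nat \<Rightarrow> real" where
  "mu_star y s = y s 0 + y s 1"

definition pibar :: "(nat \<Rightarrow> nat \<Rightarrow> real) \<Rightarrow> nat \<Rightarrow> nat \<Rightarrow> real" where
  "pibar y a s = (if y s 0 + y s 1 > 0 then y s a / (y s 0 + y s 1) else 1/2)"

definition P_pibar :: "nat \<Rightarrow> (nat \<Rightarrow> nat \<Rightarrow> nat \<Rightarrow> real) \<Rightarrow> (nat \<Rightarrow> nat \<Rightarrow> real) \<Rightarrow> real mat" where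
  "P_pibar n P y = mat n n (\<lambda>(s, s'). \<Sum>a<2. pibar y a s * P s a s')"

definition Phi_mat :: "nat \<Rightarrow> (nat \<Rightarrow> nat \<Rightarrow> nat \<Rightarrow> real) \<Rightarrow> real \<Rightarrow> (nat \<Rightarrow> nat \<Rightarrow> real) \<Rightarrow> nat \<Rightarrow> real mat" where
  "Phi_mat n P \<alpha> y st = mat n n (\<lambda>(s, s').
      (\<Sum>a<2. pibar y a s * P s a s') - mu_star y s'
      - (pibar y 1 s - \<alpha>) * (P st 1 s' - P st 0 s'))"

definition cmat :: "real mat \<Rightarrow> complex mat" where
  "cmat A = map_mat complex_of_real A"

definition assumption1 :: "real mat \<Rightarrow> bool" where
  "assumption1 A \<longleftrightarrow> order 1 (char_poly (cmat A)) = 1 \<and>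
     (\<forall>ev. eigenvalue (cmat A) ev \<and> ev \<noteq> 1 \<longrightarrow> cmod ev < 1)"

definition assumption3 :: "real mat \<Rightarrow> bool" where
  "assumption3 A \<longleftrightarrow> (\<forall>ev. eigenvalue (cmat A) ev \<longrightarrow> cmod ev < 1)"

definition U_mat :: "real mat \<Rightarrow> real mat" where
  "U_mat A = mat (dim_row A) (dim_row A)
     (\<lambda>(i, j). \<Sum>k. ((A ^\<^sub>m k) * (transpose_mat A ^\<^sub>m k)) $$ (i, j))"

definition normU :: "nat \<Rightarrow> real mat \<Rightarrow> (nat \<Rightarrow> real) \<Rightarrow> real" where
  "normU n U v = sqrt (\<Sum>i<n. \<Sum>j<n. v i * U $$ (i, j) * v j)"

definition lambda_max :: "real mat \<Rightarrow> real" where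
  "lambda_max A = Max {ev. eigenvalue A ev}"

definition S_empty :: "nat \<Rightarrow> (nat \<Rightarrow> nat \<Rightarrow> real) \<Rightarrow> nat set" where
  "S_empty n y = {s. s < n \<and> y s 1 = 0 \<and> y s 0 = 0}"

text \<open>Feasible sets of the two SOCPs; a \<in> {1,0} selects (P1) resp. (P2), with
right-hand side alpha resp. 1 - alpha.\<close>
definition socp_feasible :: "nat \<Rightarrow> (nat \<Rightarrow> nat \<Rightarrow> real) \<Rightarrow> nat \<Rightarrow> nat \<Rightarrow> real \<Rightarrow> (nat \<Rightarrow> real) set" where
  "socp_feasible n y st a b = {z. (\<Sum>s\<in>{s. s < n \<and> s \<noteq> st}. pibar y a s * z s) \<ge> b
      \<and> (\<Sum>s<n. z s) = 1 \<and> (\<forall>s<n. z s \<ge> 0)}"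

definition socp_value :: "nat \<Rightarrow> real mat \<Rightarrow> (nat \<Rightarrow> nat \<Rightarrow> real) \<Rightarrow> nat \<Rightarrow> nat \<Rightarrow> real \<Rightarrow> real" where
  "socp_value n U y st a b = Inf ((\<lambda>z. normU n U (\<lambda>s. z s - mu_star y s)) ` socp_feasible n y st a b)"

definition xD :: "nat \<Rightarrow> (nat \<Rightarrow> nat) \<Rightarrow> nat set \<Rightarrow> nat \<Rightarrow> real" where
  "xD N Sa D s = real (card {i\<in>D. Sa i = s}) / real N"

definition mD :: "nat \<Rightarrow> nat set \<Rightarrow> real" where
  "mD N D = real (card D) / real N"

end

theory Submission
  imports Defs "Jordan_Normal_Form.Spectral_Radius" "HOL-Analysis.Function_Topology"
begin

(*
  The matrix U = sum_k Phi^k (Phi^T)^k converges because Phi has spectral radius < 1, so its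
  powers decay geometrically. U is symmetric with U >= I; hence ||.||_U is a norm and
  ||v||_U <= sqrt(lambda_U) |v|_2, the bound coming from the Rayleigh quotient.

  Off the state st, Assumption 2 forces pibar(a|s) into {0, 1/2, 1}. If the weighted mass
  g(x) = sum_{s ~= st} pibar(a|s) x(D,s) falls short of b m(D) by delta, move a fraction of the
  mass of x(D) from states of smaller weight to a state of maximal weight (which is >= b since
  the SOCP is feasible). Every unit moved gains at least 1/2, so this yields w with
  g(w) = b m(D) and |w - x(D)|_2 <= 2 sqrt 2 delta. As w / m(D) is feasible,
  eta m(D) <= ||w - m(D) mu*||_U <= ||x(D) - m(D) mu*||_U + 2 sqrt 2 sqrt(lambda_U) delta,
  and the hypothesis forces delta >= (|S^0| + 1) / N.
*)

lemma pow_mat_Suc_left: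
  assumes "A \<in> carrier_mat n n"
  shows "A ^\<^sub>m Suc k = A * A ^\<^sub>m k"
proof (induction k)
  case 0
  then show ?case using assms by simp
next
  case (Suc k)
  have "A ^\<^sub>m Suc (Suc k) = (A * A ^\<^sub>m k) * A" using Suc by simp
  also have "\<dots> = A * A ^\<^sub>m Suc k" using assms by (simp add: assoc_mult_mat[of _ n n _ n _ n])
  finally show ?case .
qed

lemma transpose_pow_mat:
  fixes A :: "'a::comm_ring_1 mat"
  assumes "A \<in> carrier_mat n n"
  shows "(A ^\<^sub>m k)\<^sup>T = A\<^sup>T ^\<^sub>m k"
proof (induction k)
  case 0
  then show ?case using assms by simp
next
  case (Suc k)
  have "(A ^\<^sub>m Suc k)\<^sup>T = (A * A ^\<^sub>m k)\<^sup>T" using pow_mat_Suc_left[OF assms] by simp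
  also have "\<dots> = A\<^sup>T ^\<^sub>m Suc k" using Suc assms by (simp add: transpose_mult[of _ n n _ n])
  finally show ?case .
qed

lemma pow_mat_smult:
  fixes A :: "'a::comm_ring_1 mat"
  assumes "A \<in> carrier_mat n n"
  shows "(c \<cdot>\<^sub>m A) ^\<^sub>m k = c ^ k \<cdot>\<^sub>m A ^\<^sub>m k"
proof (induction k)
  case 0
  then show ?case using assms by (auto simp: smult_mat_def)
next
  case (Suc k)
  have "(c \<cdot>\<^sub>m A) ^\<^sub>m Suc k = c ^ k \<cdot>\<^sub>m (A ^\<^sub>m k * (c \<cdot>\<^sub>m A))"
    using Suc assms by (simp add: mult_smult_assoc_mat[of _ n n _ n])
  also have "\<dots> = c ^ Suc k \<cdot>\<^sub>m A ^\<^sub>m Suc k"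
    using assms by (simp add: mult_smult_distrib[of _ n n _ n]) (rule eq_matI, auto)
  finally show ?case .
qed

lemma eigenvalue_smult_mat:
  assumes "A \<in> carrier_mat n n" and "eigenvalue A ev"
  shows "eigenvalue (c \<cdot>\<^sub>m A) (c * ev)"
proof -
  obtain v where v: "v \<in> carrier_vec n" "v \<noteq> 0\<^sub>v n" "A *\<^sub>v v = ev \<cdot>\<^sub>v v"
    using assms unfolding eigenvalue_def eigenvector_def by auto
  have "(c \<cdot>\<^sub>m A) *\<^sub>v v = c \<cdot>\<^sub>v (A *\<^sub>v v)"
    using v(1) assms(1) by (intro eq_vecI) (auto simp: scalar_prod_def sum_distrib_left mult.assoc)
  then have "(c \<cdot>\<^sub>m A) *\<^sub>v v = (c * ev) \<cdot>\<^sub>v v"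
    using v by (simp add: smult_smult_assoc)
  then show ?thesis
    using v assms unfolding eigenvalue_def eigenvector_def by auto
qed

lemma spectral_radius_smult_less_1:
  assumes M: "M \<in> carrier_mat n n" and n: "0 < n" and r: "0 < r" "spectral_radius M < r"
  shows "spectral_radius (complex_of_real (1 / r) \<cdot>\<^sub>m M) < 1"
proof -
  define B where "B = complex_of_real (1 / r) \<cdot>\<^sub>m M"
  have B: "B \<in> carrier_mat n n" using M by (simp add: B_def)
  obtain ev where ev: "eigenvalue B ev" "spectral_radius B = norm ev"
    using spectral_radius_mem_max(1)[OF B n] unfolding spectrum_def by auto
  have "complex_of_real r \<cdot>\<^sub>m B = M"
    using r by (auto simp: B_def smult_smult_assoc[symmetric])
  then have "eigenvalue M (complex_of_real r * ev)"
    using eigenvalue_smult_mat[OF B ev(1)] by metis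
  then have "norm (complex_of_real r * ev) \<le> spectral_radius M"
    using spectral_radius_mem_max(2)[OF M n] unfolding spectrum_def by blast
  then have "r * norm ev \<le> spectral_radius M" using r by (simp add: norm_mult)
  then have "r * norm ev < r * 1" using r by linarith
  then have "norm ev < 1" using r(1) by (simp only: mult_less_cancel_left_pos)
  then show ?thesis using ev unfolding B_def by simp
qed

lemma pow_mat_geometric_decay:
  fixes A :: "real mat"
  assumes A: "A \<in> carrier_mat n n" and A3: "assumption3 A"
  obtains C \<rho> where "0 \<le> C" "0 < \<rho>" "\<rho> < 1"
    "\<And>k i j. i < n \<Longrightarrow> j < n \<Longrightarrow> \<bar>(A ^\<^sub>m k) $$ (i, j)\<bar> \<le> C * \<rho> ^ k"
proof (cases "n = 0")
  case True
  then show ?thesis using that[of 0 "1/2"] by simp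
next
  case False
  have CA: "cmat A \<in> carrier_mat n n" using A by (simp add: cmat_def)
  define sr where "sr = spectral_radius (cmat A)"
  have sr: "0 \<le> sr" "sr < 1"
    using spectral_radius_mem_max(1)[OF CA] False A3
    unfolding sr_def assumption3_def spectrum_def by auto
  define \<rho> where "\<rho> = (1 + sr) / 2"
  have \<rho>: "0 < \<rho>" "\<rho> < 1" "sr < \<rho>" using sr by (auto simp: \<rho>_def)
  define B where "B = complex_of_real (1 / \<rho>) \<cdot>\<^sub>m cmat A"
  have B: "B \<in> carrier_mat n n" using CA by (simp add: B_def)
  obtain C where C: "\<And>k. norm_bound (B ^\<^sub>m k) C"
    using spectral_radius_jnf_norm_bound_less_1_upper_triangular[OF B]
      spectral_radius_smult_less_1[OF CA _ \<rho>(1)] False \<rho>(3)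
    unfolding B_def sr_def by auto
  have "0 \<le> C" using C[of 0] B False unfolding norm_bound_def
    by (metis norm_ge_zero order_trans pow_mat_dim_square neq0_conv)
  moreover have "\<bar>(A ^\<^sub>m k) $$ (i, j)\<bar> \<le> C * \<rho> ^ k" if ij: "i < n" "j < n" for k i j
  proof -
    have "cmat A ^\<^sub>m k = cmat (A ^\<^sub>m k)"
      unfolding cmat_def by (rule sym, rule semiring_hom.mat_hom_pow[OF _ A]) (unfold_locales, auto)
    then have "(B ^\<^sub>m k) $$ (i, j) = complex_of_real ((A ^\<^sub>m k) $$ (i, j) / \<rho> ^ k)"
      using ij A CA unfolding B_def pow_mat_smult[OF CA] by (simp add: cmat_def power_one_over)
    moreover have "norm ((B ^\<^sub>m k) $$ (i, j)) \<le> C"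
      using C[of k] ij B unfolding norm_bound_def by auto
    ultimately have "\<bar>(A ^\<^sub>m k) $$ (i, j) / \<rho> ^ k\<bar> \<le> C"
      by (metis norm_of_real)
    then show ?thesis using \<rho> by (simp add: abs_divide divide_le_eq)
  qed
  ultimately show ?thesis using that \<rho> by blast
qed

definition quad_form :: "nat \<Rightarrow> real mat \<Rightarrow> (nat \<Rightarrow> real) \<Rightarrow> real" where
  "quad_form n U v = (\<Sum>i<n. \<Sum>j<n. v i * U $$ (i, j) * v j)"

definition bilin_form :: "nat \<Rightarrow> real mat \<Rightarrow> (nat \<Rightarrow> real) \<Rightarrow> (nat \<Rightarrow> real) \<Rightarrow> real" where
  "bilin_form n U u v = (\<Sum>i<n. \<Sum>j<n. u i * U $$ (i, j) * v j)"

lemma normU_eq_sqrt_quad_form: "normU n U v = sqrt (quad_form n U v)"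
  unfolding normU_def quad_form_def ..

lemma quad_form_cong: "(\<And>i. i < n \<Longrightarrow> u i = v i) \<Longrightarrow> quad_form n U u = quad_form n U v"
  unfolding quad_form_def by (intro sum.cong refl) auto

lemma quad_form_smult: "quad_form n U (\<lambda>i. c * v i) = c\<^sup>2 * quad_form n U v"
  unfolding quad_form_def by (simp add: sum_distrib_left power2_eq_square mult_ac)

lemma symmetric_mat_entry:
  assumes "U \<in> carrier_mat n n" "U\<^sup>T = U" "i < n" "j < n"
  shows "U $$ (j, i) = U $$ (i, j)"
proof -
  have "U $$ (i, j) = U\<^sup>T $$ (i, j)" using assms(2) by simp
  also have "\<dots> = U $$ (j, i)" using assms(1,3,4) by simp
  finally show ?thesis by simp
qed

lemma bilin_form_commute:
  assumes "U \<in> carrier_mat n n" "U\<^sup>T = U"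
  shows "bilin_form n U v u = bilin_form n U u v"
proof -
  have "bilin_form n U v u = (\<Sum>j<n. \<Sum>i<n. v i * U $$ (i, j) * u j)"
    unfolding bilin_form_def by (rule sum.swap)
  also have "\<dots> = bilin_form n U u v"
    unfolding bilin_form_def using assms
    by (intro sum.cong refl) (auto simp: symmetric_mat_entry)
  finally show ?thesis .
qed

lemma quad_form_add_smult:
  assumes "U \<in> carrier_mat n n" "U\<^sup>T = U"
  shows "quad_form n U (\<lambda>i. u i + t * v i)
    = quad_form n U u + 2 * t * bilin_form n U u v + t\<^sup>2 * quad_form n U v"
proof -
  have "quad_form n U (\<lambda>i. u i + t * v i)
      = quad_form n U u + t * bilin_form n U u v + t * bilin_form n U v u + t\<^sup>2 * quad_form n U v"
  proof -
    have "(u i + t * v i) * U $$ (i, j) * (u j + t * v j)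
        = u i * U $$ (i, j) * u j + t * (u i * U $$ (i, j) * v j)
          + t * (v i * U $$ (i, j) * u j) + t\<^sup>2 * (v i * U $$ (i, j) * v j)" for i j
      by (simp add: algebra_simps power2_eq_square)
    then show ?thesis
      unfolding quad_form_def bilin_form_def by (simp add: sum.distrib sum_distrib_left)
  qed
  then show ?thesis using bilin_form_commute[OF assms, of v u] by simp
qed

lemma bilin_form_Cauchy_Schwarz:
  assumes "U \<in> carrier_mat n n" "U\<^sup>T = U" and psd: "\<And>v. 0 \<le> quad_form n U v"
  shows "(bilin_form n U u v)\<^sup>2 \<le> quad_form n U u * quad_form n U v"
proof -
  let ?b = "bilin_form n U u v" and ?qu = "quad_form n U u" and ?qv = "quad_form n U v"
  have nonneg: "0 \<le> ?qu + 2 * t * ?b + t\<^sup>2 * ?qv" for t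
    using psd[of "\<lambda>i. u i + t * v i"] quad_form_add_smult[OF assms(1,2)] by simp
  show ?thesis
  proof (cases "?qv = 0")
    case True
    have "?b = 0"
    proof (rule ccontr)
      assume "?b \<noteq> 0"
      then have "?qu + 2 * (- (?qu + 1) / (2 * ?b)) * ?b + 0 = -1" by (simp add: field_simps)
      then show False using nonneg[of "- (?qu + 1) / (2 * ?b)"] True by simp
    qed
    then show ?thesis using True by simp
  next
    case False
    then have qv: "0 < ?qv" using psd[of v] by simp
    have "0 \<le> ?qu + 2 * (- ?b / ?qv) * ?b + (- ?b / ?qv)\<^sup>2 * ?qv" by (rule nonneg)
    also have "\<dots> = ?qu - ?b\<^sup>2 / ?qv" using qv by (simp add: field_simps power2_eq_square)
    finally show ?thesis using qv by (simp add: field_simps)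
  qed
qed

lemma normU_triangle:
  assumes "U \<in> carrier_mat n n" "U\<^sup>T = U" and psd: "\<And>v. 0 \<le> quad_form n U v"
  shows "normU n U (\<lambda>i. u i + v i) \<le> normU n U u + normU n U v"
proof -
  let ?b = "bilin_form n U u v" and ?qu = "quad_form n U u" and ?qv = "quad_form n U v"
  have "?b \<le> sqrt ?qu * sqrt ?qv"
    using bilin_form_Cauchy_Schwarz[OF assms] real_le_rsqrt
    by (metis abs_le_D1 real_sqrt_mult)
  then have "quad_form n U (\<lambda>i. u i + v i) \<le> (sqrt ?qu + sqrt ?qv)\<^sup>2"
    using quad_form_add_smult[OF assms(1,2), of u 1 v] psd[of u] psd[of v]
    by (simp add: power2_sum)
  then show ?thesis
    unfolding normU_eq_sqrt_quad_form using psd[of u] psd[of v] real_le_lsqrt by simp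
qed

lemma bilin_form_eq_sum_col:
  "bilin_form n U u w = (\<Sum>j<n. (\<Sum>i<n. u i * U $$ (i, j)) * w j)"
  unfolding bilin_form_def by (subst sum.swap) (simp add: sum_distrib_right)

lemma quad_form_eq_bilin_form: "quad_form n U v = bilin_form n U v v"
  unfolding quad_form_def bilin_form_def ..

lemma sum_col_smult_one_minus_mat:
  fixes c :: real
  assumes "U \<in> carrier_mat n n" "j < n"
  shows "(\<Sum>i<n. u i * (c \<cdot>\<^sub>m 1\<^sub>m n - U) $$ (i, j)) = c * u j - (\<Sum>i<n. u i * U $$ (i, j))"
proof -
  have "(\<Sum>i<n. u i * (c \<cdot>\<^sub>m 1\<^sub>m n - U) $$ (i, j))
      = (\<Sum>i<n. (if i = j then c * u i else 0) - u i * U $$ (i, j))"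
    using assms by (intro sum.cong refl) (auto simp: algebra_simps)
  then show ?thesis using assms(2) by (simp only: sum_subtractf sum.delta) simp
qed

lemma quad_form_attains_max_on_sphere:
  assumes "0 < n"
  obtains v where "(\<Sum>i<n. (v i)\<^sup>2) = 1"
    "\<And>w. (\<Sum>i<n. (w i)\<^sup>2) = 1 \<Longrightarrow> quad_form n U w \<le> quad_form n U v"
proof -
  define X where "X = product_topology (\<lambda>_. euclideanreal) {..<n}"
  define g where "g w = (\<Sum>i<n. (w i)\<^sup>2)" for w :: "nat \<Rightarrow> real"
  define K where "K = {w \<in> topspace X. g w \<in> {1}}"
  have "continuous_map X euclideanreal g"
    unfolding X_def g_def by (intro continuous_intros) auto
  then have "closedin X K"
    unfolding K_def by (rule closedin_continuous_map_preimage) auto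
  moreover have "K \<subseteq> PiE {..<n} (\<lambda>_. {-1..1})"
  proof
    fix w assume w: "w \<in> K"
    have "\<bar>w i\<bar> \<le> 1" if "i < n" for i
    proof -
      have "(w i)\<^sup>2 \<le> g w" unfolding g_def using that by (intro member_le_sum) auto
      then show ?thesis using w abs_le_square_iff[of "w i" 1] unfolding K_def by simp
    qed
    then show "w \<in> PiE {..<n} (\<lambda>_. {-1..1})"
      using w unfolding K_def X_def by (auto simp: PiE_iff abs_le_iff)
  qed
  moreover have "compactin X (PiE {..<n} (\<lambda>_. {-1..1}))"
    unfolding X_def by (subst compactin_PiE) auto
  ultimately have "compactin X K" by (metis closed_compactin)
  moreover have "continuous_map X euclideanreal (quad_form n U)"
    unfolding X_def quad_form_def by (intro continuous_intros) auto
  ultimately have compact: "compact (quad_form n U ` K)" using image_compactin by fastforce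
  define e where "e = restrict (\<lambda>i. if i = 0 then 1 else (0::real)) {..<n}"
  have "g e = (\<Sum>i<n. if i = 0 then 1 else 0)"
    unfolding g_def e_def by (intro sum.cong refl) auto
  then have "e \<in> K" using assms unfolding K_def X_def e_def by simp
  then obtain v where vK: "v \<in> K" and vmax: "\<And>w. w \<in> K \<Longrightarrow> quad_form n U w \<le> quad_form n U v"
    using compact_attains_sup[OF compact] by blast
  \<comment> \<open>The points of \<open>X\<close> are extensional functions, so a general point of the sphere is first restricted.\<close>
  have "quad_form n U w \<le> quad_form n U v" if "g w = 1" for w
  proof -
    have "restrict w {..<n} \<in> K" using that unfolding K_def X_def g_def by simp
    then show ?thesis using vmax[of "restrict w {..<n}"] quad_form_cong[of n "restrict w {..<n}" w U]
      by simp
  qed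
  then show ?thesis using that vK unfolding K_def g_def by blast
qed

lemma quad_form_le_max_on_sphere:
  assumes max: "\<And>w. (\<Sum>i<n. (w i)\<^sup>2) = 1 \<Longrightarrow> quad_form n U w \<le> lam"
  shows "quad_form n U w \<le> lam * (\<Sum>i<n. (w i)\<^sup>2)"
proof -
  define g where "g = (\<Sum>i<n. (w i)\<^sup>2)"
  show ?thesis
  proof (cases "g = 0")
    case True
    then have "\<forall>i\<in>{..<n}. w i = 0" unfolding g_def by (simp add: sum_nonneg_eq_0_iff)
    then show ?thesis unfolding quad_form_def by simp
  next
    case False
    moreover have "0 \<le> g" unfolding g_def by (simp add: sum_nonneg)
    ultimately have g: "0 < g" by simp
    have "(\<Sum>i<n. (w i / sqrt g)\<^sup>2) = 1"
      using g by (simp add: power_divide sum_divide_distrib[symmetric] g_def)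
    then have "quad_form n U (\<lambda>i. w i / sqrt g) \<le> lam" by (rule max)
    moreover have "quad_form n U (\<lambda>i. w i / sqrt g) = (1 / sqrt g)\<^sup>2 * quad_form n U w"
      using quad_form_smult[of n U "1 / sqrt g" w] by simp
    ultimately have "quad_form n U w / g \<le> lam" using g by (simp add: power_divide)
    then show ?thesis using g by (simp add: divide_le_eq g_def mult.commute)
  qed
qed

lemma quad_form_smult_one_minus_mat:
  fixes c :: real
  assumes "U \<in> carrier_mat n n"
  shows "quad_form n (c \<cdot>\<^sub>m 1\<^sub>m n - U) w = c * (\<Sum>i<n. (w i)\<^sup>2) - quad_form n U w"
proof -
  have "quad_form n (c \<cdot>\<^sub>m 1\<^sub>m n - U) w = (\<Sum>j<n. (c * w j - (\<Sum>i<n. w i * U $$ (i, j))) * w j)"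
    unfolding quad_form_eq_bilin_form bilin_form_eq_sum_col
    using sum_col_smult_one_minus_mat[OF assms] by simp
  then show ?thesis
    unfolding quad_form_eq_bilin_form bilin_form_eq_sum_col
    by (simp add: left_diff_distrib right_diff_distrib sum_subtractf sum_distrib_left
        power2_eq_square mult_ac)
qed

lemma quad_form_eq_0_imp_vec_mult_eq_0:
  assumes U: "U \<in> carrier_mat n n" "U\<^sup>T = U" and psd: "\<And>w. 0 \<le> quad_form n U w"
    and v: "quad_form n U v = 0" and j: "j < n"
  shows "(\<Sum>i<n. v i * U $$ (i, j)) = 0"
proof -
  define r where "r j = (\<Sum>i<n. v i * U $$ (i, j))" for j
  have "(bilin_form n U v r)\<^sup>2 \<le> 0"
    using bilin_form_Cauchy_Schwarz[OF U psd, of v r] v by simp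
  moreover have "bilin_form n U v r = (\<Sum>j<n. (r j)\<^sup>2)"
    unfolding bilin_form_eq_sum_col r_def by (simp add: power2_eq_square)
  ultimately have "(\<Sum>j<n. (r j)\<^sup>2) = 0" by (simp add: sum_nonneg)
  then show ?thesis using j unfolding r_def by (simp add: sum_nonneg_eq_0_iff)
qed

lemma quad_form_maximizer_eigenvalue:
  assumes U: "U \<in> carrier_mat n n" "U\<^sup>T = U" and v: "(\<Sum>i<n. (v i)\<^sup>2) = 1"
    and max: "\<And>w. quad_form n U w \<le> quad_form n U v * (\<Sum>i<n. (w i)\<^sup>2)"
  shows "eigenvalue U (quad_form n U v)"
proof -
  define lam where "lam = quad_form n U v"
  define V where "V = lam \<cdot>\<^sub>m 1\<^sub>m n - U"
  have V: "V \<in> carrier_mat n n" "V\<^sup>T = V"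
    using U unfolding V_def by (auto intro!: eq_matI simp: symmetric_mat_entry)
  have qV: "quad_form n V w = lam * (\<Sum>i<n. (w i)\<^sup>2) - quad_form n U w" for w
    unfolding V_def by (rule quad_form_smult_one_minus_mat[OF U(1)])
  have V_col: "(\<Sum>i<n. v i * V $$ (i, j)) = 0" if "j < n" for j
    by (rule quad_form_eq_0_imp_vec_mult_eq_0[OF V _ _ that]) (use max qV v in \<open>simp_all add: lam_def\<close>)
  have col: "(\<Sum>i<n. v i * U $$ (i, j)) = lam * v j" if "j < n" for j
    using V_col[OF that] sum_col_smult_one_minus_mat[OF U(1) that, of v lam] unfolding V_def by simp
  have "U *\<^sub>v vec n v = lam \<cdot>\<^sub>v vec n v"
  proof (rule eq_vecI)
    fix j assume "j < dim_vec (lam \<cdot>\<^sub>v vec n v)"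
    then have j: "j < n" by simp
    have "(U *\<^sub>v vec n v) $ j = (\<Sum>i<n. v i * U $$ (i, j))"
      using U j by (auto simp: scalar_prod_def lessThan_atLeast0 symmetric_mat_entry mult.commute
          intro!: sum.cong)
    then show "(U *\<^sub>v vec n v) $ j = (lam \<cdot>\<^sub>v vec n v) $ j"
      using col[OF j] j by simp
  qed (use U in simp)
  moreover have "vec n v \<noteq> 0\<^sub>v n"
  proof
    assume "vec n v = 0\<^sub>v n"
    then have "v i = 0" if "i < n" for i using that by (metis index_vec index_zero_vec(1))
    then show False using v by simp
  qed
  ultimately show ?thesis
    using U unfolding eigenvalue_def eigenvector_def lam_def by (intro exI[of _ "vec n v"]) auto
qed

lemma quad_form_le_lambda_max:
  assumes U: "U \<in> carrier_mat n n" "U\<^sup>T = U"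
  shows "quad_form n U w \<le> lambda_max U * (\<Sum>i<n. (w i)\<^sup>2)"
proof (cases "n = 0")
  case True
  then show ?thesis by (simp add: quad_form_def)
next
  case False
  then obtain v where v: "(\<Sum>i<n. (v i)\<^sup>2) = 1"
    and sphere: "\<And>w. (\<Sum>i<n. (w i)\<^sup>2) = 1 \<Longrightarrow> quad_form n U w \<le> quad_form n U v"
    using quad_form_attains_max_on_sphere by blast
  have max: "quad_form n U w \<le> quad_form n U v * (\<Sum>i<n. (w i)\<^sup>2)" for w
    by (rule quad_form_le_max_on_sphere[OF sphere])
  have "quad_form n U v \<le> lambda_max U"
    using quad_form_maximizer_eigenvalue[OF U v max] card_finite_spectrum(1)[OF U(1)]
    unfolding lambda_max_def spectrum_def by (intro Max_ge) auto
  then show ?thesis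
    using max[of w] by (smt (verit) mult_right_mono sum_nonneg zero_le_power2)
qed

lemma normU_smult: "normU n U (\<lambda>i. c * v i) = \<bar>c\<bar> * normU n U v"
  unfolding normU_eq_sqrt_quad_form quad_form_smult by (simp add: real_sqrt_mult)

lemma normU_le_lambda_max:
  assumes "U \<in> carrier_mat n n" "U\<^sup>T = U"
  shows "normU n U v \<le> sqrt (lambda_max U) * sqrt (\<Sum>i<n. (v i)\<^sup>2)"
  unfolding normU_eq_sqrt_quad_form real_sqrt_mult[symmetric]
  using quad_form_le_lambda_max[OF assms] by (rule real_sqrt_le_mono)

lemma U_mat_carrier: "A \<in> carrier_mat n n \<Longrightarrow> U_mat A \<in> carrier_mat n n"
  unfolding U_mat_def by simp

lemma U_mat_entry:
  fixes A :: "real mat"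
  assumes A: "A \<in> carrier_mat n n" and ij: "i < n" "j < n"
  shows "U_mat A $$ (i, j) = (\<Sum>k. \<Sum>l<n. (A ^\<^sub>m k) $$ (i, l) * (A ^\<^sub>m k) $$ (j, l))"
proof -
  have "(A ^\<^sub>m k * A\<^sup>T ^\<^sub>m k) $$ (i, j) = (\<Sum>l<n. (A ^\<^sub>m k) $$ (i, l) * (A ^\<^sub>m k) $$ (j, l))" for k
    unfolding transpose_pow_mat[OF A, symmetric]
    using A ij by (simp add: scalar_prod_def lessThan_atLeast0)
  then show ?thesis using A ij unfolding U_mat_def by simp
qed

lemma summable_U_mat_series:
  fixes A :: "real mat"
  assumes A: "A \<in> carrier_mat n n" and A3: "assumption3 A" and ij: "i < n" "j < n"
  shows "summable (\<lambda>k. \<Sum>l<n. (A ^\<^sub>m k) $$ (i, l) * (A ^\<^sub>m k) $$ (j, l))"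
proof -
  obtain C \<rho> where C: "0 \<le> C" "0 < \<rho>" "\<rho> < 1"
    and decay: "\<And>k i j. i < n \<Longrightarrow> j < n \<Longrightarrow> \<bar>(A ^\<^sub>m k) $$ (i, j)\<bar> \<le> C * \<rho> ^ k"
    using pow_mat_geometric_decay[OF A A3] by blast
  have entry: "\<bar>(A ^\<^sub>m k) $$ (i, l) * (A ^\<^sub>m k) $$ (j, l)\<bar> \<le> C\<^sup>2 * (\<rho>\<^sup>2) ^ k"
    if "l < n" for k l
  proof -
    have "\<bar>(A ^\<^sub>m k) $$ (i, l) * (A ^\<^sub>m k) $$ (j, l)\<bar> \<le> (C * \<rho> ^ k) * (C * \<rho> ^ k)"
      unfolding abs_mult using decay ij that C by (intro mult_mono) auto
    then show ?thesis by (simp add: power2_eq_square power_mult_distrib mult_ac)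
  qed
  have "summable (\<lambda>k. real n * (C\<^sup>2 * (\<rho>\<^sup>2) ^ k))"
    using C by (intro summable_mult summable_geometric) (simp add: abs_square_less_1)
  then show ?thesis
  proof (rule summable_comparison_test')
    fix k
    have "norm (\<Sum>l<n. (A ^\<^sub>m k) $$ (i, l) * (A ^\<^sub>m k) $$ (j, l))
        \<le> (\<Sum>l<n. \<bar>(A ^\<^sub>m k) $$ (i, l) * (A ^\<^sub>m k) $$ (j, l)\<bar>)"
      unfolding real_norm_def by (rule sum_abs)
    also have "\<dots> \<le> (\<Sum>l<n. C\<^sup>2 * (\<rho>\<^sup>2) ^ k)"
      using entry by (intro sum_mono) simp
    finally show "norm (\<Sum>l<n. (A ^\<^sub>m k) $$ (i, l) * (A ^\<^sub>m k) $$ (j, l))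
        \<le> real n * (C\<^sup>2 * (\<rho>\<^sup>2) ^ k)" by simp
  qed
qed

lemma U_mat_symmetric:
  fixes A :: "real mat"
  assumes "A \<in> carrier_mat n n"
  shows "(U_mat A)\<^sup>T = U_mat A"
proof (rule eq_matI)
  have U: "U_mat A \<in> carrier_mat n n" using U_mat_carrier[OF assms] .
  fix i j assume "i < dim_row (U_mat A)" "j < dim_col (U_mat A)"
  then have ij: "i < n" "j < n" using U by auto
  have "U_mat A $$ (j, i) = U_mat A $$ (i, j)"
    unfolding U_mat_entry[OF assms ij] U_mat_entry[OF assms ij(2,1)] by (simp only: mult.commute)
  then show "(U_mat A)\<^sup>T $$ (i, j) = U_mat A $$ (i, j)" using U ij by simp
qed (simp_all add: U_mat_def)

lemma quad_form_U_mat_sums: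
  fixes A :: "real mat"
  assumes A: "A \<in> carrier_mat n n" and A3: "assumption3 A"
  shows "(\<lambda>k. \<Sum>l<n. (\<Sum>i<n. v i * (A ^\<^sub>m k) $$ (i, l))\<^sup>2) sums quad_form n (U_mat A) v"
proof -
  let ?a = "\<lambda>k i l. (A ^\<^sub>m k) $$ (i, l)"
  have "(\<lambda>k. \<Sum>i<n. \<Sum>j<n. v i * (\<Sum>l<n. ?a k i l * ?a k j l) * v j) sums quad_form n (U_mat A) v"
    unfolding quad_form_def using A A3
    by (intro sums_sum sums_mult sums_mult2)
      (auto simp: U_mat_entry summable_U_mat_series summable_sums)
  moreover have "(\<Sum>i<n. \<Sum>j<n. v i * (\<Sum>l<n. ?a k i l * ?a k j l) * v j)
      = (\<Sum>l<n. (\<Sum>i<n. v i * ?a k i l)\<^sup>2)" for k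
  proof -
    have "(\<Sum>i<n. \<Sum>j<n. v i * (\<Sum>l<n. ?a k i l * ?a k j l) * v j)
        = (\<Sum>i<n. \<Sum>j<n. \<Sum>l<n. (v i * ?a k i l) * (v j * ?a k j l))"
      by (simp add: sum_distrib_left sum_distrib_right mult_ac)
    also have "\<dots> = (\<Sum>i<n. \<Sum>l<n. \<Sum>j<n. (v i * ?a k i l) * (v j * ?a k j l))"
      by (intro sum.cong refl sum.swap)
    also have "\<dots> = (\<Sum>l<n. \<Sum>i<n. \<Sum>j<n. (v i * ?a k i l) * (v j * ?a k j l))"
      by (rule sum.swap)
    finally show ?thesis by (simp add: power2_eq_square sum_product)
  qed
  ultimately show ?thesis by simp
qed

lemma sum_squares_le_quad_form_U_mat:
  fixes A :: "real mat"
  assumes A: "A \<in> carrier_mat n n" and A3: "assumption3 A"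
  shows "(\<Sum>i<n. (v i)\<^sup>2) \<le> quad_form n (U_mat A) v"
proof -
  note sums = quad_form_U_mat_sums[OF A A3, of v]
  have "(\<Sum>i<n. v i * (A ^\<^sub>m 0) $$ (i, l)) = v l" if "l < n" for l
  proof -
    have "(\<Sum>i<n. v i * (A ^\<^sub>m 0) $$ (i, l)) = (\<Sum>i<n. if i = l then v i else 0)"
      using A that by (intro sum.cong refl) auto
    then show ?thesis using that by simp
  qed
  then have "(\<Sum>i<n. (v i)\<^sup>2) = (\<Sum>k\<in>{0}. \<Sum>l<n. (\<Sum>i<n. v i * (A ^\<^sub>m k) $$ (i, l))\<^sup>2)" by simp
  also have "\<dots> \<le> (\<Sum>k. \<Sum>l<n. (\<Sum>i<n. v i * (A ^\<^sub>m k) $$ (i, l))\<^sup>2)"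
    by (rule sum_le_suminf[OF sums_summable[OF sums]]) (simp_all add: sum_nonneg)
  also have "\<dots> = quad_form n (U_mat A) v" using sums_unique[OF sums] by simp
  finally show ?thesis .
qed

definition shift_mass :: "nat set \<Rightarrow> nat \<Rightarrow> real \<Rightarrow> (nat \<Rightarrow> real) \<Rightarrow> nat \<Rightarrow> real" where
  "shift_mass L m \<theta> X s = X s - \<theta> * (if s \<in> L then X s else 0) + (if s = m then \<theta> * sum X L else 0)"

lemma sum_if_mem_subset:
  fixes f :: "nat \<Rightarrow> real"
  assumes "L \<subseteq> {..<n}"
  shows "(\<Sum>s<n. if s \<in> L then f s else 0) = sum f L"
  using sum.inter_restrict[of "{..<n}" f L] assms by (simp add: Int_absorb1)

context
  fixes L :: "nat set" and m n :: nat and X :: "nat \<Rightarrow> real"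
  assumes L: "L \<subseteq> {..<n}" "m \<notin> L" and m: "m < n" and X: "\<And>s. s < n \<Longrightarrow> 0 \<le> X s"
begin

lemma shift_mass_nonneg:
  assumes "0 \<le> \<theta>" "\<theta> \<le> 1" "s < n"
  shows "0 \<le> shift_mass L m \<theta> X s"
  using assms X[OF assms(3)] sum_nonneg[of L X] X L(1)
  unfolding shift_mass_def by (auto simp: mult_left_le_one_le subset_eq)

lemma sum_shift_mass: "(\<Sum>s<n. shift_mass L m \<theta> X s) = (\<Sum>s<n. X s)"
  using m L(1) unfolding shift_mass_def
  by (simp add: sum.distrib sum_subtractf sum_distrib_left[symmetric] sum_if_mem_subset)

lemma sum_weighted_shift_mass:
  "(\<Sum>s<n. w s * shift_mass L m \<theta> X s)
    = (\<Sum>s<n. w s * X s) + \<theta> * (\<Sum>s\<in>L. (w m - w s) * X s)"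
proof -
  have "w s * shift_mass L m \<theta> X s = w s * X s - \<theta> * (if s \<in> L then w s * X s else 0)
      + (if s = m then \<theta> * (w m * sum X L) else 0)" for s
    unfolding shift_mass_def by (simp add: algebra_simps)
  then have "(\<Sum>s<n. w s * shift_mass L m \<theta> X s) = (\<Sum>s<n. w s * X s)
      - \<theta> * (\<Sum>s<n. if s \<in> L then w s * X s else 0) + (\<Sum>s<n. if s = m then \<theta> * (w m * sum X L) else 0)"
    by (simp only: sum.distrib sum_subtractf sum_distrib_left)
  then show ?thesis
    using m L(1) by (simp add: sum_if_mem_subset sum_distrib_left left_diff_distrib sum_subtractf algebra_simps)
qed

lemma sum_sq_shift_mass_le:
  assumes "0 \<le> \<theta>"
  shows "(\<Sum>s<n. (shift_mass L m \<theta> X s - X s)\<^sup>2) \<le> 2 * (\<theta> * sum X L)\<^sup>2"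
proof -
  have "(shift_mass L m \<theta> X s - X s)\<^sup>2
      = (if s = m then (\<theta> * sum X L)\<^sup>2 else 0) + (if s \<in> L then \<theta>\<^sup>2 * (X s)\<^sup>2 else 0)" for s
    using L(2) unfolding shift_mass_def by (auto simp: power_mult_distrib)
  then have "(\<Sum>s<n. (shift_mass L m \<theta> X s - X s)\<^sup>2) = (\<theta> * sum X L)\<^sup>2 + \<theta>\<^sup>2 * (\<Sum>s\<in>L. (X s)\<^sup>2)"
    using m L(1) by (simp add: sum.distrib sum_if_mem_subset sum_distrib_left)
  moreover have "(\<Sum>s\<in>L. (X s)\<^sup>2) \<le> (sum X L)\<^sup>2"
  proof -
    have "(\<Sum>s\<in>L. (X s)\<^sup>2) \<le> (\<Sum>s\<in>L. sum X L * X s)"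
      using X L(1) finite_subset[OF L(1)] unfolding power2_eq_square
      by (intro sum_mono mult_right_mono member_le_sum) (auto simp: subset_eq)
    then show ?thesis by (simp add: power2_eq_square sum_distrib_left[symmetric])
  qed
  ultimately show ?thesis by (simp add: power_mult_distrib mult_left_mono)
qed

end

lemma mass_transfer:
  fixes w X :: "nat \<Rightarrow> real"
  assumes m: "m < n" and gap: "0 < \<gamma>" "\<And>s. s < n \<Longrightarrow> w s = w m \<or> w s \<le> w m - \<gamma>"
    and X: "\<And>s. s < n \<Longrightarrow> 0 \<le> X s"
    and t: "(\<Sum>s<n. w s * X s) \<le> t" "t \<le> w m * (\<Sum>s<n. X s)"
  obtains W where "\<And>s. s < n \<Longrightarrow> 0 \<le> W s" "(\<Sum>s<n. W s) = (\<Sum>s<n. X s)"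
    "(\<Sum>s<n. w s * W s) = t"
    "(\<Sum>s<n. (W s - X s)\<^sup>2) \<le> 2 * ((t - (\<Sum>s<n. w s * X s)) / \<gamma>)\<^sup>2"
proof -
  define L where "L = {s. s < n \<and> w s \<noteq> w m}"
  have L: "L \<subseteq> {..<n}" "m \<notin> L" unfolding L_def by auto
  define \<Gamma> where "\<Gamma> = (\<Sum>s\<in>L. (w m - w s) * X s)"
  define \<delta> where "\<delta> = t - (\<Sum>s<n. w s * X s)"
  have "\<gamma> * sum X L \<le> \<Gamma>"
    unfolding \<Gamma>_def sum_distrib_left
    using gap(2) X L(1) unfolding L_def by (intro sum_mono mult_right_mono) force+
  have "(\<Sum>s<n. (w m - w s) * X s) = \<Gamma>"
    unfolding \<Gamma>_def using L by (intro sum.mono_neutral_right) (auto simp: L_def)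
  then have "(\<Sum>s<n. w s * X s) = w m * (\<Sum>s<n. X s) - \<Gamma>"
    by (simp add: left_diff_distrib sum_subtractf sum_distrib_left)
  then have \<delta>: "0 \<le> \<delta>" "\<delta> \<le> \<Gamma>" using t unfolding \<delta>_def by auto
  \<comment> \<open>If \<open>\<Gamma> = 0\<close> then also \<open>\<delta> = 0\<close>, and \<open>\<theta> = 0\<close> by the convention \<open>x / 0 = 0\<close>.\<close>
  define \<theta> where "\<theta> = \<delta> / \<Gamma>"
  have \<theta>: "0 \<le> \<theta>" "\<theta> \<le> 1" "\<theta> * \<Gamma> = \<delta>"
    using \<delta> unfolding \<theta>_def by (auto simp: divide_le_eq_1)
  have "\<gamma> * (\<theta> * sum X L) \<le> \<delta>"
    using mult_left_mono[OF \<open>\<gamma> * sum X L \<le> \<Gamma>\<close> \<theta>(1)] \<theta>(3) by (simp add: mult_ac)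
  then have "\<theta> * sum X L \<le> \<delta> / \<gamma>" using gap(1) by (simp add: le_divide_eq mult.commute)
  moreover have "0 \<le> \<theta> * sum X L" using \<theta> X L by (simp add: sum_nonneg subset_eq)
  ultimately have dist: "2 * (\<theta> * sum X L)\<^sup>2 \<le> 2 * (\<delta> / \<gamma>)\<^sup>2" by (simp add: power_mono)
  show ?thesis
  proof (rule that[of "shift_mass L m \<theta> X"])
    show "0 \<le> shift_mass L m \<theta> X s" if "s < n" for s
      by (rule shift_mass_nonneg[OF L m X \<theta>(1,2) that])
    show "(\<Sum>s<n. shift_mass L m \<theta> X s) = (\<Sum>s<n. X s)"
      by (rule sum_shift_mass[OF L m X])
    show "(\<Sum>s<n. w s * shift_mass L m \<theta> X s) = t"
      using sum_weighted_shift_mass[OF L m X, where w = w and \<theta> = \<theta>] \<theta>(3) unfolding \<Gamma>_def \<delta>_def by simp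
    show "(\<Sum>s<n. (shift_mass L m \<theta> X s - X s)\<^sup>2) \<le> 2 * ((t - (\<Sum>s<n. w s * X s)) / \<gamma>)\<^sup>2"
      using sum_sq_shift_mass_le[where X = X, OF L m X \<theta>(1)] dist unfolding \<delta>_def by linarith
  qed
qed

lemma lambda_max_ge_one:
  assumes U: "U \<in> carrier_mat n n" "U\<^sup>T = U" and n: "0 < n"
    and ge: "\<And>v. (\<Sum>i<n. (v i)\<^sup>2) \<le> quad_form n U v"
  shows "1 \<le> lambda_max U"
proof -
  define e where "e i = (if i = 0 then 1 else 0 :: real)" for i :: nat
  have "(\<Sum>i<n. (e i)\<^sup>2) = 1"
  proof -
    have "(\<Sum>i<n. (e i)\<^sup>2) = (\<Sum>i<n. if i = 0 then 1 else 0)" unfolding e_def by (intro sum.cong) auto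
    then show ?thesis using n by simp
  qed
  then show ?thesis using ge[of e] quad_form_le_lambda_max[OF U, of e] by simp
qed

lemma pibar_mem_half_grid:
  assumes "0 \<le> y s 0" "0 \<le> y s 1" "\<not> (0 < y s 0 \<and> 0 < y s 1)" "a < 2"
  shows "pibar y a s \<in> {0, 1/2, 1}"
  using assms unfolding pibar_def by (auto simp: less_2_cases_iff)

lemma sum_Collect_less_neq:
  fixes n st :: nat
  shows "(\<Sum>s\<in>{s. s < n \<and> s \<noteq> st}. f s) = (\<Sum>s<n. if s \<noteq> st then f s else 0)"
proof -
  have "(\<Sum>s\<in>{s \<in> {..<n}. s \<noteq> st}. f s) = (\<Sum>s<n. if s \<noteq> st then f s else 0)"
    by (rule sum.inter_filter) simp
  moreover have "{s \<in> {..<n}. s \<noteq> st} = {s. s < n \<and> s \<noteq> st}" by auto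
  ultimately show ?thesis by simp
qed

lemma socp_mass_transfer:
  fixes X :: "nat \<Rightarrow> real"
  assumes b: "0 < b" and grid: "\<And>s. s < n \<Longrightarrow> s \<noteq> st \<Longrightarrow> pibar y a s \<in> {0, 1/2, 1}"
    and feas: "socp_feasible n y st a b \<noteq> {}" and X: "\<And>s. s < n \<Longrightarrow> 0 \<le> X s"
  defines "g Z \<equiv> (\<Sum>s\<in>{s. s < n \<and> s \<noteq> st}. pibar y a s * Z s)"
  obtains W where "\<And>s. s < n \<Longrightarrow> 0 \<le> W s" "(\<Sum>s<n. W s) = (\<Sum>s<n. X s)"
    "b * (\<Sum>s<n. X s) \<le> g W"
    "(\<Sum>s<n. (W s - X s)\<^sup>2) \<le> 8 * (max 0 (b * (\<Sum>s<n. X s) - g X))\<^sup>2"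
proof -
  define c where "c s = (if s = st then 0 else pibar y a s)" for s
  have g: "g Z = (\<Sum>s<n. c s * Z s)" for Z
    unfolding g_def c_def sum_Collect_less_neq by (intro sum.cong) auto
  obtain z where z: "\<And>s. s < n \<Longrightarrow> 0 \<le> z s" "(\<Sum>s<n. z s) = 1" "b \<le> g z"
    using feas unfolding socp_feasible_def g_def by auto
  then have "{..<n} \<noteq> {}" by auto
  then obtain m where m: "m < n" "\<And>s. s < n \<Longrightarrow> c s \<le> c m"
    using Max_in[of "c ` {..<n}"] Max_ge[of "c ` {..<n}"] by fastforce
  have "b \<le> c m"
  proof -
    have "g z \<le> (\<Sum>s<n. c m * z s)" unfolding g using m z by (intro sum_mono mult_right_mono) auto
    then show ?thesis using z by (simp add: sum_distrib_left[symmetric])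
  qed
  have grid': "c s \<in> {0, 1/2, 1}" if "s < n" for s using grid[OF that] by (simp add: c_def)
  have gap: "c s = c m \<or> c s \<le> c m - 1/2" if "s < n" for s
    using grid'[OF that] grid'[OF m(1)] m(2)[OF that] by auto
  define t where "t = max (g X) (b * (\<Sum>s<n. X s))"
  have "g X \<le> c m * (\<Sum>s<n. X s)"
    unfolding g sum_distrib_left using m X by (intro sum_mono mult_right_mono) auto
  moreover have "b * (\<Sum>s<n. X s) \<le> c m * (\<Sum>s<n. X s)"
    using \<open>b \<le> c m\<close> X by (intro mult_right_mono sum_nonneg) auto
  ultimately obtain W where W: "\<And>s. s < n \<Longrightarrow> 0 \<le> W s" "(\<Sum>s<n. W s) = (\<Sum>s<n. X s)"
      "g W = t" "(\<Sum>s<n. (W s - X s)\<^sup>2) \<le> 2 * ((t - g X) / (1/2))\<^sup>2"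
    using mass_transfer[of m n "1/2" c X t] m(1) gap X unfolding g t_def by auto
  have "2 * ((t - g X) / (1/2))\<^sup>2 = 8 * (max 0 (b * (\<Sum>s<n. X s) - g X))\<^sup>2"
    unfolding t_def by (simp add: max_def power2_eq_square algebra_simps)
  then show ?thesis
    using W by (intro that[of W]) (auto simp: t_def)
qed

lemma socp_value_mult_le_normU:
  assumes psd: "\<And>v. 0 \<le> quad_form n U v" and M: "0 < M"
    and W: "\<And>s. s < n \<Longrightarrow> 0 \<le> W s" "(\<Sum>s<n. W s) = M"
      "b * M \<le> (\<Sum>s\<in>{s. s < n \<and> s \<noteq> st}. pibar y a s * W s)"
  shows "socp_value n U y st a b * M \<le> normU n U (\<lambda>s. W s - M * mu_star y s)"
proof -
  define z where "z s = W s / M" for s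
  have "z \<in> socp_feasible n y st a b"
    using W M unfolding socp_feasible_def z_def
    by (simp add: sum_divide_distrib[symmetric] le_divide_eq mult.commute[of b] mult.assoc)
  then have "socp_value n U y st a b \<le> normU n U (\<lambda>s. z s - mu_star y s)"
    unfolding socp_value_def normU_eq_sqrt_quad_form
    by (rule cInf_lower[OF imageI]) (auto intro!: bdd_belowI[of _ 0] simp: psd)
  moreover have "normU n U (\<lambda>s. W s - M * mu_star y s) = M * normU n U (\<lambda>s. z s - mu_star y s)"
    using normU_smult[of n U M "\<lambda>s. z s - mu_star y s"] M unfolding z_def
    by (simp add: right_diff_distrib)
  ultimately show ?thesis using M by (simp add: mult.commute)
qed

lemma normU_le_of_sum_sq_le:
  assumes U: "U \<in> carrier_mat n n" "U\<^sup>T = U" and v: "(\<Sum>i<n. (v i)\<^sup>2) \<le> 8 * d\<^sup>2"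
    and d: "0 \<le> d" and lam: "0 \<le> lambda_max U"
  shows "normU n U v \<le> 2 * sqrt 2 * sqrt (lambda_max U) * d"
proof -
  have "normU n U v \<le> sqrt (lambda_max U) * sqrt (\<Sum>i<n. (v i)\<^sup>2)"
    by (rule normU_le_lambda_max[OF U])
  also have "\<dots> \<le> sqrt (lambda_max U) * sqrt ((2 * d)\<^sup>2 * 2)"
    using v lam by (intro mult_left_mono real_sqrt_le_mono) (simp_all add: power2_eq_square)
  also have "\<dots> = 2 * sqrt 2 * sqrt (lambda_max U) * d"
    unfolding real_sqrt_mult real_sqrt_abs using d by simp
  finally show ?thesis .
qed

lemma sum_pibar_le_of_normU_le:
  fixes U :: "real mat" and X :: "nat \<Rightarrow> real"
  assumes U: "U \<in> carrier_mat n n" "U\<^sup>T = U" "\<And>v. (\<Sum>i<n. (v i)\<^sup>2) \<le> quad_form n U v"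
    and b: "0 < b" and grid: "\<And>s. s < n \<Longrightarrow> s \<noteq> st \<Longrightarrow> pibar y a s \<in> {0, 1/2, 1}"
    and feas: "socp_feasible n y st a b \<noteq> {}" and X: "\<And>s. s < n \<Longrightarrow> 0 \<le> X s"
    and K: "0 < K" and \<eta>: "\<eta> \<le> socp_value n U y st a b"
    and close: "normU n U (\<lambda>s. X s - (\<Sum>s<n. X s) * mu_star y s)
      \<le> \<eta> * (\<Sum>s<n. X s) - 2 * sqrt 2 * sqrt (lambda_max U) * K"
  shows "(\<Sum>s\<in>{s. s < n \<and> s \<noteq> st}. pibar y a s * X s) \<le> b * (\<Sum>s<n. X s) - K"
proof -
  define M where "M = (\<Sum>s<n. X s)"
  define g where "g Z = (\<Sum>s\<in>{s. s < n \<and> s \<noteq> st}. pibar y a s * Z s)" for Z :: "nat \<Rightarrow> real"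
  define d where "d = max 0 (b * M - g X)"
  have psd: "0 \<le> quad_form n U v" for v using U(3)[of v] sum_nonneg[of "{..<n}" "\<lambda>i. (v i)\<^sup>2"] by simp
  have "0 < n" using feas unfolding socp_feasible_def by (cases "n = 0") auto
  define c where "c = 2 * sqrt 2 * sqrt (lambda_max U)"
  have lam: "1 \<le> lambda_max U" using lambda_max_ge_one[OF U(1,2) \<open>0 < n\<close> U(3)] .
  then have c: "0 < c" by (simp add: c_def)
  obtain W where W: "\<And>s. s < n \<Longrightarrow> 0 \<le> W s" "(\<Sum>s<n. W s) = M" "b * M \<le> g W"
      "(\<Sum>s<n. (W s - X s)\<^sup>2) \<le> 8 * d\<^sup>2"
    using socp_mass_transfer[where X = X, OF b grid feas X] unfolding M_def g_def d_def by blast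
  have "0 < M"
  proof (rule ccontr)
    assume "\<not> 0 < M"
    moreover have "0 \<le> M" using X unfolding M_def by (intro sum_nonneg) simp
    ultimately have "M = 0" by simp
    moreover have "0 \<le> normU n U (\<lambda>s. X s - M * mu_star y s)"
      unfolding normU_eq_sqrt_quad_form using psd by simp
    moreover have "0 < c * K" using c K by simp
    ultimately show False using close unfolding M_def[symmetric] c_def[symmetric] by simp
  qed
  have WX: "normU n U (\<lambda>s. W s - X s) \<le> c * d"
    unfolding c_def by (rule normU_le_of_sum_sq_le[OF U(1,2) W(4)]) (use lam in \<open>simp_all add: d_def\<close>)
  have "\<eta> * M \<le> socp_value n U y st a b * M" using \<eta> \<open>0 < M\<close> by simp
  also have "\<dots> \<le> normU n U (\<lambda>s. W s - M * mu_star y s)"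
    using socp_value_mult_le_normU[OF psd \<open>0 < M\<close> W(1,2)] W(3) unfolding g_def by blast
  also have "\<dots> \<le> normU n U (\<lambda>s. X s - M * mu_star y s) + normU n U (\<lambda>s. W s - X s)"
    using normU_triangle[OF U(1,2) psd, of "\<lambda>s. X s - M * mu_star y s" "\<lambda>s. W s - X s"] by simp
  finally have "c * K \<le> c * d" using close WX unfolding M_def[symmetric] c_def[symmetric] by linarith
  then have "K \<le> d" using c by simp
  then show ?thesis using K unfolding d_def g_def M_def by simp
qed

lemma sum_xD_eq_mD:
  assumes "\<forall>i\<in>{1..N}. Sa i < n" "D \<subseteq> {1..N}"
  shows "(\<Sum>s<n. xD N Sa D s) = mD N D"
proof -
  have "finite D" using assms(2) finite_subset by blast
  have "D = (\<Union>s<n. {i\<in>D. Sa i = s})" using assms by auto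
  moreover have "card (\<Union>s<n. {i\<in>D. Sa i = s}) = (\<Sum>s<n. card {i\<in>D. Sa i = s})"
    by (rule card_UN_disjoint) (use \<open>finite D\<close> in auto)
  ultimately have "card D = (\<Sum>s<n. card {i\<in>D. Sa i = s})" by simp
  then show ?thesis unfolding xD_def mD_def by (simp add: sum_divide_distrib[symmetric])
qed

theorem mainTheorem14:
  fixes n N :: nat and P :: "nat \<Rightarrow> nat \<Rightarrow> nat \<Rightarrow> real" and r y :: "nat \<Rightarrow> nat \<Rightarrow> real"
    and \<alpha> :: real and st :: nat and Sa :: "nat \<Rightarrow> nat" and D :: "nat set"
  assumes mdp: "is_mdp n P"
    and alpha: "0 < \<alpha>" "\<alpha> < 1"
    and opt: "lp_optimal n P r \<alpha> y"
    and A1: "assumption1 (P_pibar n P y)"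
    and A2: "st < n" "y st 0 > 0" "y st 1 > 0"
      "\<forall>s<n. y s 0 > 0 \<and> y s 1 > 0 \<longrightarrow> s = st"
    and A3: "assumption3 (Phi_mat n P \<alpha> y st)"
    and feas1: "socp_feasible n y st 1 \<alpha> \<noteq> {}"
    and feas2: "socp_feasible n y st 0 (1 - \<alpha>) \<noteq> {}"
    and N: "N > 0"
    and arms: "\<forall>i\<in>{1..N}. Sa i < n"
    and D: "D \<subseteq> {1..N}"
    and cond: "let U = U_mat (Phi_mat n P \<alpha> y st);
                   \<eta> = min (socp_value n U y st 1 \<alpha>) (socp_value n U y st 0 (1 - \<alpha>));
                   eps = 2 * sqrt 2 * sqrt (lambda_max U) * (real (card (S_empty n y)) + 1) / real N
               in normU n U (\<lambda>s. xD N Sa D s - mD N D * mu_star y s) \<le> \<eta> * mD N D - eps"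
  shows "((\<Sum>s\<in>{s. s < n \<and> s \<noteq> st}. pibar y 1 s * xD N Sa D s)
           \<le> \<alpha> * mD N D - (real (card (S_empty n y)) + 1) / real N)
    \<and> ((\<Sum>s\<in>{s. s < n \<and> s \<noteq> st}. pibar y 0 s * xD N Sa D s)
           \<le> (1 - \<alpha>) * mD N D - (real (card (S_empty n y)) + 1) / real N)"
proof -
  define Phi where "Phi = Phi_mat n P \<alpha> y st"
  define U where "U = U_mat Phi"
  define \<eta> where "\<eta> = min (socp_value n U y st 1 \<alpha>) (socp_value n U y st 0 (1 - \<alpha>))"
  define K where "K = (real (card (S_empty n y)) + 1) / real N"
  have Phi: "Phi \<in> carrier_mat n n" unfolding Phi_def Phi_mat_def by simp
  have U: "U \<in> carrier_mat n n" "U\<^sup>T = U" "\<And>v. (\<Sum>i<n. (v i)\<^sup>2) \<le> quad_form n U v"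
    unfolding U_def using U_mat_carrier[OF Phi] U_mat_symmetric[OF Phi]
      sum_squares_le_quad_form_U_mat[OF Phi A3[folded Phi_def]] by auto
  have grid: "pibar y a s \<in> {0, 1/2, 1}" if "a < 2" "s < n" "s \<noteq> st" for a s
    using opt A2(4) that unfolding lp_optimal_def lp_feasible_def
    by (intro pibar_mem_half_grid) auto
  have K: "0 < K" using N by (simp add: K_def)
  have mD: "mD N D = (\<Sum>s<n. xD N Sa D s)" using sum_xD_eq_mD[OF arms D] by simp
  have close: "normU n U (\<lambda>s. xD N Sa D s - (\<Sum>s<n. xD N Sa D s) * mu_star y s)
      \<le> \<eta> * (\<Sum>s<n. xD N Sa D s) - 2 * sqrt 2 * sqrt (lambda_max U) * K"
    using cond unfolding Let_def mD U_def Phi_def \<eta>_def K_def by simp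
  have "(\<Sum>s\<in>{s. s < n \<and> s \<noteq> st}. pibar y 1 s * xD N Sa D s) \<le> \<alpha> * mD N D - K"
    unfolding mD using alpha feas1 K close grid
    by (intro sum_pibar_le_of_normU_le[OF U]) (auto simp: \<eta>_def xD_def)
  moreover have "(\<Sum>s\<in>{s. s < n \<and> s \<noteq> st}. pibar y 0 s * xD N Sa D s) \<le> (1 - \<alpha>) * mD N D - K"
    unfolding mD using alpha feas2 K close grid
    by (intro sum_pibar_le_of_normU_le[OF U]) (auto simp: \<eta>_def xD_def)
  ultimately show ?thesis unfolding K_def by simp
qed

end
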